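(* Let $a>c$ and $\mathbf V'\subset\mathbf V$. For any function $u:\mathbf V'\to\mathbb R$ there is at most one function $v:\mathbf V\to\mathbb R$ which solves $(DFE_a)$ at every $x\in\mathbf V\setminus\mathbf V'$ and agrees with $u$ on $\mathbf V'$.
   Context: Setting: network $\Gamma$ with arcs $\mathcal E$ (finite, closed under inversion, vertices $\mathbf V$, connected), Hamiltonians $H_\gamma$ as standard (continuous, coercive, quasiconvex in $p$ with $\mathrm{Int}\{H_\gamma(s,\cdot)\le b\}=\{H_\gamma(s,\cdot)<b\}$, $H_{\tilde\gamma}(s,p)=H_\gamma(1-s,-p)$), $a_0$ and $c$ as follows: $a_\gamma=\max_s\min_pH_\gamma$, $c_\gamma$ = least level with a periodic viscosity subsolution, $a_0=\max\{\max_{\gamma\text{ not closed}}a_\gamma,\max_{\gamma\text{ closed}}c_\gamma\}$, with $\min_pH_\gamma(s,p)$ constant in $s$ whenever $a_\gamma=a_0$. Abstract graph $\mathbf X=(\mathbf V,\mathbf E)$, $\Psi:\mathbf E\to\mathcal E$ bijection, $\mathrm o(e)=\Psi(e)(0)$, $\mathrm t(e)=\Psi(e)(1)$, $-e=\Psi^{-1}(\widetilde{\Psi(e)})$, $\mathbf E_x=\{e:\mathrm o(e)=x\}$, $\sigma_a(e)=\int_0^1\max\{p:H_{\Psi(e)}(t,p)=a\}\,dt$ for $a\ge a_0$. A function $v$ solves $(DFE_a)$ at $x$ if $v(x)=\min_{e\in\mathbf E_x}(v(\mathrm t(e))+\sigma_a(-e))$; it is a subsolution of $(DFE_a)$ if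 $v(\mathrm t(e))-v(\mathrm o(e))\le\sigma_a(e)$ for all $e$. $c=\min\{a\ge a_0:(DFE_a)$ admits a subsolution$\}$. *)

theory Defs
  imports "HOL-Analysis.Analysis"
begin

text \<open>Since Psi is a bijection between
  the abstract edges and the arcs, each Hamiltonian H_gamma is indexed by the
  corresponding abstract edge: H e s p = H_{Psi(e)}(s,p). Orientation reversal
  of arcs corresponds to neg e = -e; an arc is closed iff orig e = t e.\<close>

definition a_gamma :: "('e \<Rightarrow> real \<Rightarrow> real \<Rightarrow> real) \<Rightarrow> 'e \<Rightarrow> real" where
  "a_gamma H e = (SUP s\<in>{0..1}. INF p. H e s p)"

definition periodic_visc_subsol ::
  "('e \<Rightarrow> real \<Rightarrow> real \<Rightarrow> real) \<Rightarrow> 'e \<Rightarrow> real \<Rightarrow> (real \<Rightarrow> real) \<Rightarrow> bool" where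
  "periodic_visc_subsol H e b u \<longleftrightarrow>
     continuous_on {0..1} u \<and> u 0 = u 1 \<and>
     (\<forall>s\<in>{0<..<1}. \<forall>\<phi> \<phi>'.
        (\<forall>x. (\<phi> has_real_derivative \<phi>' x) (at x)) \<and> continuous_on UNIV \<phi>' \<and>
        \<phi> s = u s \<and> (\<exists>\<delta>>0. \<forall>x\<in>{0<..<1}. \<bar>x - s\<bar> < \<delta> \<longrightarrow> u x \<le> \<phi> x)
        \<longrightarrow> H e s (\<phi>' s) \<le> b)"

definition c_gamma :: "('e \<Rightarrow> real \<Rightarrow> real \<Rightarrow> real) \<Rightarrow> 'e \<Rightarrow> real" where
  "c_gamma H e = Inf {b. \<exists>u. periodic_visc_subsol H e b u}"

definition a0 :: "'e set \<Rightarrow> ('e \<Rightarrow> 'v) \<Rightarrow> ('e \<Rightarrow> 'v) \<Rightarrow> ('e \<Rightarrow> real \<Rightarrow> real \<Rightarrow> real) \<Rightarrow> real" where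
  "a0 E orig t H = Max (a_gamma H ` {e\<in>E. orig e \<noteq> t e} \<union> c_gamma H ` {e\<in>E. orig e = t e})"

definition sigma :: "('e \<Rightarrow> real \<Rightarrow> real \<Rightarrow> real) \<Rightarrow> real \<Rightarrow> 'e \<Rightarrow> real" where
  "sigma H a e = integral {0..1} (\<lambda>s. Sup {p. H e s p = a})"

definition dfe_subsol ::
  "'e set \<Rightarrow> ('e \<Rightarrow> 'v) \<Rightarrow> ('e \<Rightarrow> 'v) \<Rightarrow> ('e \<Rightarrow> real \<Rightarrow> real \<Rightarrow> real) \<Rightarrow> real \<Rightarrow> ('v \<Rightarrow> real) \<Rightarrow> bool" where
  "dfe_subsol E orig t H a v \<longleftrightarrow> (\<forall>e\<in>E. v (t e) - v (orig e) \<le> sigma H a e)"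

definition dfe_solves_at ::
  "'e set \<Rightarrow> ('e \<Rightarrow> 'v) \<Rightarrow> ('e \<Rightarrow> 'v) \<Rightarrow> ('e \<Rightarrow> 'e) \<Rightarrow> ('e \<Rightarrow> real \<Rightarrow> real \<Rightarrow> real)
     \<Rightarrow> real \<Rightarrow> ('v \<Rightarrow> real) \<Rightarrow> 'v \<Rightarrow> bool" where
  "dfe_solves_at E orig t neg H a v x \<longleftrightarrow>
     v x = Min ((\<lambda>e. v (t e) + sigma H a (neg e)) ` {e\<in>E. orig e = x})"

definition crit_value ::
  "'e set \<Rightarrow> ('e \<Rightarrow> 'v) \<Rightarrow> ('e \<Rightarrow> 'v) \<Rightarrow> ('e \<Rightarrow> real \<Rightarrow> real \<Rightarrow> real) \<Rightarrow> real" where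
  "crit_value E orig t H = Inf {a. a \<ge> a0 E orig t H \<and> (\<exists>v. dfe_subsol E orig t H a v)}"

definition network_setting ::
  "'v set \<Rightarrow> 'e set \<Rightarrow> ('e \<Rightarrow> 'v) \<Rightarrow> ('e \<Rightarrow> 'v) \<Rightarrow> ('e \<Rightarrow> 'e) \<Rightarrow> ('e \<Rightarrow> real \<Rightarrow> real \<Rightarrow> real) \<Rightarrow> bool" where
  "network_setting V E orig t neg H \<longleftrightarrow>
     finite V \<and> finite E \<and> E \<noteq> {} \<and>
     (\<forall>e\<in>E. orig e \<in> V \<and> t e \<in> V \<and> neg e \<in> E \<and> neg (neg e) = e \<and> neg e \<noteq> e \<and>
             orig (neg e) = t e) \<and>
     (\<forall>x\<in>V. \<forall>y\<in>V. (x, y) \<in> {(orig e, t e) | e. e \<in> E}\<^sup>*) \<and>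
     (\<forall>e\<in>E. continuous_on ({0..1} \<times> UNIV) (\<lambda>(s, p). H e s p)) \<and>
     (\<forall>e\<in>E. \<forall>M. \<exists>R. \<forall>s\<in>{0..1}. \<forall>p. \<bar>p\<bar> \<ge> R \<longrightarrow> H e s p \<ge> M) \<and>
     (\<forall>e\<in>E. \<forall>s\<in>{0..1}. \<forall>b. convex {p. H e s p \<le> b}) \<and>
     (\<forall>e\<in>E. \<forall>s\<in>{0..1}. \<forall>b. interior {p. H e s p \<le> b} = {p. H e s p < b}) \<and>
     (\<forall>e\<in>E. \<forall>s\<in>{0..1}. \<forall>p. H (neg e) s p = H e (1 - s) (- p)) \<and>
     (\<forall>e\<in>E. a_gamma H e = a0 E orig t H \<longrightarrow>
        (\<exists>m. \<forall>s\<in>{0..1}. (INF p. H e s p) = m))"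

end

theory Submission
  imports Defs
begin

text \<open>
  Choose a level b with a0 \<le> b < a at which (DFE_b) has a subsolution \<phi>. Writing \<sigma>_a(e) as
  the integral over s of the largest root of H_e(s,\<cdot>) = a shows that \<sigma> is strictly increasing
  in the level above a0: the root is strictly increasing in the level, upper semicontinuous in s,
  and continuous in s once the level exceeds min_p H_e(s,\<cdot>) everywhere. Hence \<phi> is a strict
  subsolution of (DFE_a). If v - w had a positive maximum, then at a maximum point x (necessarily
  outside V') an edge attaining the minimum in the equation for w leads to another maximum point
  at which w - \<phi> is strictly smaller, which is impossible on the finite set of maximum points.
  That every level b \<ge> a0 meets the graph of each H_e(s,\<cdot>) uses, on closed arcs, a parabola
  touching a periodic viscosity subsolution from above.
\<close>

section \<open>The largest root of a level of the Hamiltonian\<close>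

definition max_root :: "(real \<Rightarrow> real \<Rightarrow> real) \<Rightarrow> real \<Rightarrow> real \<Rightarrow> real" where
  "max_root h c s = Sup {p. h s p = c}"

lemma sigma_eq_integral_max_root: "sigma H a e = integral {0..1} (max_root (H e) a)"
  by (simp add: sigma_def max_root_def[abs_def])

locale hamiltonian =
  fixes h :: "real \<Rightarrow> real \<Rightarrow> real"
  assumes continuous: "continuous_on ({0..1} \<times> UNIV) (\<lambda>(s, p). h s p)"
    and coercive: "\<forall>M. \<exists>R. \<forall>s\<in>{0..1}. \<forall>p. \<bar>p\<bar> \<ge> R \<longrightarrow> h s p \<ge> M"
    and convex_sublevel: "\<forall>s\<in>{0..1}. \<forall>b. convex {p. h s p \<le> b}"
    and interior_sublevel: "\<forall>s\<in>{0..1}. \<forall>b. interior {p. h s p \<le> b} = {p. h s p < b}"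
begin

lemma coercivity_radius:
  obtains R where "R > 0" "\<And>s p. s \<in> {0..1} \<Longrightarrow> \<bar>p\<bar> \<ge> R \<Longrightarrow> h s p \<ge> M"
proof -
  obtain R where "\<forall>s\<in>{0..1}. \<forall>p. \<bar>p\<bar> \<ge> R \<longrightarrow> h s p \<ge> M"
    using coercive by blast
  then show ?thesis
    by (intro that[of "\<bar>R\<bar> + 1"]) auto
qed

lemma continuous_in_p:
  assumes "s \<in> {0..1}"
  shows "continuous_on UNIV (h s)"
proof -
  have "continuous_on UNIV ((\<lambda>(s, p). h s p) \<circ> Pair s)"
    apply (rule continuous_on_compose)
     apply (intro continuous_intros)
    apply (rule continuous_on_subset[OF continuous])
    using assms by auto
  then show ?thesis
    by (simp add: o_def)
qed

lemma continuous_in_s: "continuous_on {0..1} (\<lambda>s. h s p)"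
proof -
  have "continuous_on {0..1} ((\<lambda>(s, p). h s p) \<circ> (\<lambda>s. (s, p)))"
    apply (rule continuous_on_compose)
     apply (intro continuous_intros)
    apply (rule continuous_on_subset[OF continuous])
    by auto
  then show ?thesis
    by (simp add: o_def)
qed

lemma sublevel_extends_right:
  assumes "s \<in> {0..1}" "h s p < c"
  obtains q where "q > p" "h s q \<le> c"
proof -
  have "p \<in> interior {q. h s q \<le> c}"
    using assms interior_sublevel by auto
  then obtain r where r: "r > 0" "ball p r \<subseteq> {q. h s q \<le> c}"
    by (meson openE open_interior interior_subset subset_trans)
  then have "p + r/2 \<in> ball p r"
    by (simp add: dist_real_def)
  with r show ?thesis
    by (intro that[of "p + r/2"]) auto
qed

lemma sublevel_strict_between:
  assumes s: "s \<in> {0..1}" and "h s q \<le> c" "h s r \<le> c" "q < x" "x < r"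
  shows "h s x < c"
proof -
  have iv: "is_interval {p. h s p \<le> c}"
    using convex_sublevel s is_interval_convex_1 by blast
  have "{q<..<r} \<subseteq> {p. h s p \<le> c}"
  proof
    fix y assume "y \<in> {q<..<r}"
    then show "y \<in> {p. h s p \<le> c}"
      using iv[unfolded is_interval_1, rule_format, of q r y] assms(2,3) by auto
  qed
  then have "{q<..<r} \<subseteq> interior {p. h s p \<le> c}"
    by (simp add: interior_maximal)
  then show ?thesis
    using assms(4,5) interior_sublevel s by auto
qed

lemma
  assumes s: "s \<in> {0..1}" and ex: "\<exists>p. h s p \<le> c"
  shows max_root_eq: "h s (max_root h c s) = c"
    and le_max_root: "\<And>p. h s p \<le> c \<Longrightarrow> p \<le> max_root h c s"
proof -
  obtain R where R: "\<And>s p. s \<in> {0..1} \<Longrightarrow> \<bar>p\<bar> \<ge> R \<Longrightarrow> h s p \<ge> c + 1"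
    using coercivity_radius by blast
  define S where "S = {p. h s p \<le> c}"
  have "closed S"
    unfolding S_def using continuous_in_p[OF s] by (simp add: closed_Collect_le)
  moreover have bdd: "bdd_above S"
  proof (rule bdd_aboveI)
    fix p assume "p \<in> S"
    then have "\<not> \<bar>p\<bar> \<ge> R"
      using R[OF s] unfolding S_def by force
    then show "p \<le> R"
      by linarith
  qed
  moreover have "S \<noteq> {}"
    using ex S_def by auto
  ultimately have mS: "Sup S \<in> S"
    using closed_contains_Sup by blast
  have ub: "\<And>p. p \<in> S \<Longrightarrow> p \<le> Sup S"
    using bdd by (simp add: cSup_upper)
  have hm: "h s (Sup S) = c"
  proof (rule ccontr)
    assume "h s (Sup S) \<noteq> c"
    with mS have "h s (Sup S) < c"
      unfolding S_def by auto
    then obtain q where "q > Sup S" "q \<in> S"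
      using sublevel_extends_right[OF s] unfolding S_def by blast
    then show False
      using ub by fastforce
  qed
  have "max_root h c s = Sup S"
    unfolding max_root_def by (rule cSup_eq_maximum) (use hm ub S_def in auto)
  then show "h s (max_root h c s) = c" "\<And>p. h s p \<le> c \<Longrightarrow> p \<le> max_root h c s"
    using hm ub S_def by auto
qed

lemma max_root_strict_mono:
  assumes s: "s \<in> {0..1}" and ex: "\<exists>p. h s p \<le> c" and "c < c'"
  shows "max_root h c s < max_root h c' s"
proof -
  have "h s (max_root h c s) < c'"
    using max_root_eq[OF s ex] \<open>c < c'\<close> by simp
  then obtain q where "q > max_root h c s" "h s q \<le> c'"
    using sublevel_extends_right[OF s] by blast
  moreover have "q \<le> max_root h c' s"
    using le_max_root[OF s] \<open>h s q \<le> c'\<close> by blast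
  ultimately show ?thesis
    by simp
qed

lemma closed_sublevel_projection: "closed {s\<in>{0..1}. \<exists>p\<in>{y..z}. h s p \<le> c}"
proof -
  define K where "K = {x \<in> {0..1} \<times> {y..z}. (\<lambda>(s, p). h s p) x \<le> (\<lambda>_. c) x}"
  have "closed K"
    unfolding K_def
    apply (rule continuous_on_closed_Collect_le)
      apply (rule continuous_on_subset[OF continuous])
    by (auto simp: closed_Times)
  then have "compact K"
    unfolding compact_eq_bounded_closed K_def
    by (auto intro: bounded_subset[of "{0..1} \<times> {y..z}"] simp: bounded_Times)
  then have "compact (fst ` K)"
    by (rule compact_continuous_image[OF continuous_on_fst[OF continuous_on_id]])
  moreover have "fst ` K = {s\<in>{0..1}. \<exists>p\<in>{y..z}. h s p \<le> c}"
    unfolding K_def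
    apply (rule equalityI)
     apply (auto simp: image_iff)[1]
    by (clarsimp simp: image_iff) (metis fst_conv atLeastAtMost_iff)
  ultimately show ?thesis
    using compact_imp_closed by metis
qed

context
  fixes c R
  assumes ex: "\<forall>s\<in>{0..1}. \<exists>p. h s p \<le> c"
    and R: "\<And>s p. s \<in> {0..1} \<Longrightarrow> \<bar>p\<bar> \<ge> R \<Longrightarrow> h s p \<ge> c + 1"
begin

lemma max_root_bounded:
  assumes s: "s \<in> {0..1}"
  shows "\<bar>max_root h c s\<bar> < R"
proof (rule ccontr)
  assume "\<not> \<bar>max_root h c s\<bar> < R"
  then have "h s (max_root h c s) \<ge> c + 1"
    using R[OF s] by simp
  then show False
    using max_root_eq[OF s] ex s by simp
qed

lemma max_root_ge_iff:
  assumes s: "s \<in> {0..1}"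
  shows "max_root h c s \<ge> y \<longleftrightarrow> (\<exists>p\<in>{y..R}. h s p \<le> c)"
proof
  assume "max_root h c s \<ge> y"
  then show "\<exists>p\<in>{y..R}. h s p \<le> c"
    using max_root_bounded[OF s] max_root_eq[OF s] ex s
    by (intro bexI[of _ "max_root h c s"]) auto
next
  assume "\<exists>p\<in>{y..R}. h s p \<le> c"
  then show "max_root h c s \<ge> y"
    using le_max_root[OF s] by force
qed


lemma max_root_measurable: "max_root h c \<in> borel_measurable (lebesgue_on {0..1})"
  unfolding borel_measurable_vimage_halfspace_component_ge
proof (intro allI impI)
  fix y :: real and i :: real
  assume "i \<in> Basis"
  then have "i = 1"
    by (simp add: Basis_real_def)
  have "{s\<in>{0..1}. \<exists>p\<in>{y..R}. h s p \<le> c} \<in> sets lebesgue"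
    using closed_sublevel_projection lebesgue_closedin[of UNIV] by simp
  then have "{s\<in>{0..1}. \<exists>p\<in>{y..R}. h s p \<le> c} \<in> sets (lebesgue_on {0..1})"
    by (auto simp: sets_restrict_space_iff)
  moreover have "{s\<in>{0..1}. max_root h c s \<ge> y} = {s\<in>{0..1}. \<exists>p\<in>{y..R}. h s p \<le> c}"
    using max_root_ge_iff by blast
  ultimately show "{s \<in> {0..1}. max_root h c s \<bullet> i \<ge> y} \<in> sets (lebesgue_on {0..1})"
    using \<open>i = 1\<close> by simp
qed


end


lemma max_root_integrable:
  assumes ex: "\<forall>s\<in>{0..1}. \<exists>p. h s p \<le> c"
  shows "max_root h c integrable_on {0..1}"
proof -
  obtain R where R: "\<And>s p. s \<in> {0..1} \<Longrightarrow> \<bar>p\<bar> \<ge> R \<Longrightarrow> h s p \<ge> c + 1"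
    using coercivity_radius by blast
  show ?thesis
    by (rule measurable_bounded_by_integrable_imp_integrable_real[
          OF max_root_measurable[OF ex R], where g = "\<lambda>_. R"])
      (use max_root_bounded[OF ex R] in \<open>auto simp: less_imp_le\<close>)
qed

lemma max_root_upper_semicontinuous:
  assumes ex: "\<forall>s\<in>{0..1}. \<exists>p. h s p \<le> c" and s0: "s0 \<in> {0..1}" and "\<epsilon> > 0"
  obtains \<delta> where "\<delta> > 0"
    "\<And>s. s \<in> {0..1} \<Longrightarrow> dist s s0 < \<delta> \<Longrightarrow> max_root h c s < max_root h c s0 + \<epsilon>"
proof -
  obtain R where R: "\<And>s p. s \<in> {0..1} \<Longrightarrow> \<bar>p\<bar> \<ge> R \<Longrightarrow> h s p \<ge> c + 1"
    using coercivity_radius by blast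
  define C where "C = {s\<in>{0..1}. \<exists>p\<in>{max_root h c s0 + \<epsilon>..R}. h s p \<le> c}"
  have C_iff: "s \<in> C \<longleftrightarrow> max_root h c s \<ge> max_root h c s0 + \<epsilon>" if "s \<in> {0..1}" for s
    using max_root_ge_iff[OF ex R that] that unfolding C_def by blast
  have "s0 \<notin> C"
    using C_iff[OF s0] \<open>\<epsilon> > 0\<close> by simp
  moreover have "closed C"
    unfolding C_def by (rule closed_sublevel_projection)
  ultimately obtain \<delta> where "\<delta> > 0" "\<And>s. dist s s0 < \<delta> \<Longrightarrow> s \<notin> C"
    unfolding closed_def open_dist by (metis ComplI ComplD dist_commute)
  then show ?thesis
    using C_iff by (intro that) force+
qed

lemma max_root_lower_semicontinuous:
  assumes s0: "s0 \<in> {0..1}" and q: "h s0 q < c" and "\<epsilon> > 0"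
  obtains \<delta> where "\<delta> > 0"
    "\<And>s. s \<in> {0..1} \<Longrightarrow> dist s s0 < \<delta> \<Longrightarrow> max_root h c s > max_root h c s0 - \<epsilon>"
proof -
  define r0 where "r0 = max_root h c s0"
  have ex0: "\<exists>p. h s0 p \<le> c"
    using q less_imp_le by blast
  have "q \<le> r0" "h s0 r0 = c"
    using le_max_root[OF s0 ex0] max_root_eq[OF s0 ex0] q r0_def by simp_all
  with q have "q < r0"
    by (cases "q = r0") auto
  define p where "p = (max q (r0 - \<epsilon>) + r0) / 2"
  have p: "q < p" "p < r0" "r0 - \<epsilon> < p"
    using \<open>q < r0\<close> \<open>\<epsilon> > 0\<close> unfolding p_def by auto
  have "h s0 p < c"
    using sublevel_strict_between[OF s0 _ _ p(1,2)] q \<open>h s0 r0 = c\<close> by simp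
  then obtain \<delta> where "\<delta> > 0"
    and \<delta>: "\<And>s. s \<in> {0..1} \<Longrightarrow> dist s s0 < \<delta> \<Longrightarrow> dist (h s p) (h s0 p) < c - h s0 p"
    using continuous_in_s[of p] s0 unfolding continuous_on_iff by (metis diff_gt_0_iff_gt)
  show ?thesis
  proof (rule that[OF \<open>\<delta> > 0\<close>])
    fix s assume s: "s \<in> {0..1}" "dist s s0 < \<delta>"
    then have "h s p \<le> c"
      using \<delta>[OF s] by (auto simp: dist_real_def)
    then have "p \<le> max_root h c s"
      using le_max_root[OF s(1)] by blast
    then show "max_root h c s > max_root h c s0 - \<epsilon>"
      using p(3) r0_def by simp
  qed
qed

lemma max_root_continuous:
  assumes ex: "\<forall>s\<in>{0..1}. \<exists>p. h s p < c"
  shows "continuous_on {0..1} (max_root h c)"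
  unfolding continuous_on_iff
proof (intro ballI allI impI)
  fix s0 \<epsilon> :: real
  assume s0: "s0 \<in> {0..1}" and "\<epsilon> > 0"
  have ex': "\<forall>s\<in>{0..1}. \<exists>p. h s p \<le> c"
    using ex by (meson less_imp_le)
  obtain q where q: "h s0 q < c"
    using ex s0 by blast
  obtain \<delta>1 where "\<delta>1 > 0"
    and up: "\<And>s. s \<in> {0..1} \<Longrightarrow> dist s s0 < \<delta>1 \<Longrightarrow> max_root h c s < max_root h c s0 + \<epsilon>"
    using max_root_upper_semicontinuous[OF ex' s0 \<open>\<epsilon> > 0\<close>] by blast
  obtain \<delta>2 where "\<delta>2 > 0"
    and lo: "\<And>s. s \<in> {0..1} \<Longrightarrow> dist s s0 < \<delta>2 \<Longrightarrow> max_root h c s > max_root h c s0 - \<epsilon>"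
    using max_root_lower_semicontinuous[OF s0 q \<open>\<epsilon> > 0\<close>] by blast
  show "\<exists>\<delta>>0. \<forall>s\<in>{0..1}. dist s s0 < \<delta> \<longrightarrow> dist (max_root h c s) (max_root h c s0) < \<epsilon>"
  proof (intro exI[of _ "min \<delta>1 \<delta>2"] conjI ballI impI)
    fix s assume "s \<in> {0..1}" "dist s s0 < min \<delta>1 \<delta>2"
    then show "dist (max_root h c s) (max_root h c s0) < \<epsilon>"
      using up[of s] lo[of s] by (simp add: dist_real_def abs_less_iff)
  qed (use \<open>\<delta>1 > 0\<close> \<open>\<delta>2 > 0\<close> in simp)
qed

lemma integral_max_root_strict_mono:
  assumes ex: "\<forall>s\<in>{0..1}. \<exists>p. h s p \<le> c" and "c < c'"
  shows "integral {0..1} (max_root h c) < integral {0..1} (max_root h c')"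
proof -
  define c2 where "c2 = (c + c') / 2"
  have c2: "c < c2" "c2 < c'"
    using \<open>c < c'\<close> c2_def by auto
  have ex2: "\<forall>s\<in>{0..1}. \<exists>p. h s p < c2"
  proof
    fix s :: real
    assume "s \<in> {0..1}"
    with ex obtain p where "h s p \<le> c"
      by blast
    with c2(1) show "\<exists>p. h s p < c2"
      by (intro exI[of _ p]) simp
  qed
  have ex3: "\<forall>s\<in>{0..1}. \<exists>p. h s p < c'"
    using ex2 c2(2) by (meson less_trans)
  have int1: "max_root h c integrable_on {0..1}"
    by (rule max_root_integrable[OF ex])
  have int2: "max_root h c2 integrable_on {0..1}"
    by (rule max_root_integrable) (use ex2 in \<open>meson less_imp_le\<close>)
  have int3: "max_root h c' integrable_on {0..1}"
    by (rule max_root_integrable) (use ex3 in \<open>meson less_imp_le\<close>)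
  have "continuous_on {0..1} (\<lambda>s. max_root h c' s - max_root h c2 s)"
    by (intro continuous_intros max_root_continuous ex2 ex3)
  then obtain sm where sm: "sm \<in> {0..1}"
    and min: "\<And>s. s \<in> {0..1} \<Longrightarrow> max_root h c' sm - max_root h c2 sm \<le> max_root h c' s - max_root h c2 s"
    using continuous_attains_inf[OF compact_Icc _ \<open>continuous_on {0..1} _\<close>] by force
  define m where "m = max_root h c' sm - max_root h c2 sm"
  have "\<exists>p. h sm p \<le> c2"
    using ex2 sm by (meson less_imp_le)
  then have "m > 0"
    unfolding m_def using max_root_strict_mono[OF sm _ c2(2)] by simp
  have "m = integral {0..1} (\<lambda>_::real. m)"
    by simp
  also have "\<dots> \<le> integral {0..1} (\<lambda>s. max_root h c' s - max_root h c2 s)"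
    by (rule integral_le[OF integrable_const_ivl integrable_diff[OF int3 int2]])
      (use min m_def in simp)
  also have "\<dots> = integral {0..1} (max_root h c') - integral {0..1} (max_root h c2)"
    by (rule integral_diff[OF int3 int2])
  finally have "integral {0..1} (max_root h c2) < integral {0..1} (max_root h c')"
    using \<open>m > 0\<close> by simp
  moreover have "integral {0..1} (max_root h c) \<le> integral {0..1} (max_root h c2)"
    by (rule integral_le[OF int1 int2]) (use max_root_strict_mono ex c2(1) in \<open>meson less_imp_le\<close>)
  ultimately show ?thesis
    by simp
qed


section \<open>Minima of the Hamiltonian and periodic viscosity subsolutions\<close>

lemma min_attained:
  assumes s: "s \<in> {0..1}"
  obtains p0 where "\<And>p. h s p0 \<le> h s p"
proof -
  obtain R where "R > 0" and R: "\<And>t q. t \<in> {0..1} \<Longrightarrow> \<bar>q\<bar> \<ge> R \<Longrightarrow> h t q \<ge> h s 0 + 1"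
    using coercivity_radius by blast
  have "continuous_on {-R..R} (h s)"
    using continuous_in_p[OF s] continuous_on_subset by blast
  then obtain p0 where "p0 \<in> {-R..R}" and p0: "\<And>p. p \<in> {-R..R} \<Longrightarrow> h s p0 \<le> h s p"
    using continuous_attains_inf[OF compact_Icc _ \<open>continuous_on {-R..R} (h s)\<close>] \<open>R > 0\<close>
    by auto
  have "h s p0 \<le> h s 0"
    using p0[of 0] \<open>R > 0\<close> by simp
  have "h s p0 \<le> h s p" for p
  proof (cases "p \<in> {-R..R}")
    case True
    then show ?thesis
      using p0 by blast
  next
    case False
    then have "\<bar>p\<bar> \<ge> R"
      by auto
    then show ?thesis
      using R[OF s] \<open>h s p0 \<le> h s 0\<close> by force
  qed
  then show ?thesis
    by (rule that)
qed

lemma bounded_at_zero: "\<exists>B. \<forall>s\<in>{0..1}. h s 0 \<le> B"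
  using continuous_attains_sup[OF compact_Icc _ continuous_in_s[of 0]] by force

lemma exists_le_Sup_Inf:
  assumes s: "s \<in> {0..1}"
  shows "\<exists>p. h s p \<le> (SUP s\<in>{0..1}. INF p. h s p)"
proof -
  obtain B where B: "\<forall>s\<in>{0..1}. h s 0 \<le> B"
    using bounded_at_zero by blast
  have "(INF p. h s' p) \<le> B" if s': "s' \<in> {0..1}" for s'
  proof -
    obtain q where "\<And>p. h s' q \<le> h s' p"
      using min_attained[OF s'] by blast
    then have "bdd_below (range (h s'))"
      by (intro bdd_belowI[of _ "h s' q"]) auto
    then have "(INF p. h s' p) \<le> h s' 0"
      by (rule cINF_lower) simp
    then show ?thesis
      using B s' by force
  qed
  then have "bdd_above ((\<lambda>s. INF p. h s p) ` {0..1})"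
    by (intro bdd_aboveI[of _ B]) auto
  then have "(INF p. h s p) \<le> (SUP s\<in>{0..1}. INF p. h s p)"
    using s by (rule cSUP_upper[rotated])
  moreover obtain p0 where p0: "\<And>p. h s p0 \<le> h s p"
    using min_attained[OF s] by blast
  then have "(INF p. h s p) = h s p0"
    by (intro cInf_eq_minimum) auto
  ultimately show ?thesis
    by auto
qed

lemma above_level_nearby:
  assumes s0: "s0 \<in> {0..1}" and above: "\<And>p. h s0 p > b"
  obtains d where "d > 0" "\<And>t q. t \<in> {0..1} \<Longrightarrow> dist t s0 < d \<Longrightarrow> h t q > b"
proof -
  obtain R where R: "\<And>t q. t \<in> {0..1} \<Longrightarrow> \<bar>q\<bar> \<ge> R \<Longrightarrow> h t q \<ge> b + 1"
    using coercivity_radius by blast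
  define C where "C = {s\<in>{0..1}. \<exists>p\<in>{-R..R}. h s p \<le> b}"
  have "closed C"
    unfolding C_def by (rule closed_sublevel_projection)
  moreover have "s0 \<notin> C"
  proof
    assume "s0 \<in> C"
    then obtain p where "h s0 p \<le> b"
      unfolding C_def by blast
    with above[of p] show False
      by simp
  qed
  ultimately obtain d where "d > 0" and d: "\<And>s. dist s s0 < d \<Longrightarrow> s \<notin> C"
    unfolding closed_def open_dist by (metis ComplI ComplD dist_commute)
  have "h t q > b" if "t \<in> {0..1}" "dist t s0 < d" for t q
  proof (cases "\<bar>q\<bar> \<ge> R")
    case True
    then show ?thesis
      using R[OF that(1)] by force
  next
    case False
    then have "q \<in> {-R..R}"
      by auto
    then show ?thesis
      using d[OF that(2)] that(1) unfolding C_def by force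
  qed
  with \<open>d > 0\<close> show ?thesis
    by (rule that)
qed

end


lemma parabola_touches_from_above:
  fixes u :: "real \<Rightarrow> real"
  assumes u: "continuous_on {m - \<rho>..m + \<rho>} u" and "\<rho> > 0"
  obtains x0 K where "x0 \<in> {m - \<rho><..<m + \<rho>}"
    "\<And>x. x \<in> {m - \<rho>..m + \<rho>} \<Longrightarrow> u x \<le> u x0 + K * ((x - m)\<^sup>2 - (x0 - m)\<^sup>2)"
proof -
  define I where "I = {m - \<rho>..m + \<rho>}"
  have "I \<noteq> {}"
    using \<open>\<rho> > 0\<close> unfolding I_def by simp
  have "continuous_on I (\<lambda>x. \<bar>u x\<bar>)"
    unfolding I_def by (intro continuous_intros u)
  then obtain xb where xb: "\<And>x. x \<in> I \<Longrightarrow> \<bar>u x\<bar> \<le> \<bar>u xb\<bar>"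
    using continuous_attains_sup[OF _ \<open>I \<noteq> {}\<close>] unfolding I_def by force
  define B where "B = \<bar>u xb\<bar>"
  \<comment> \<open>the parabola rises by more than the oscillation 2B of u between m and the endpoints\<close>
  define K where "K = (2 * B + 1) / \<rho>\<^sup>2"
  have K\<rho>: "K * \<rho>\<^sup>2 = 2 * B + 1"
    unfolding K_def using \<open>\<rho> > 0\<close> by simp
  define g where "g x = u x - K * (x - m)\<^sup>2" for x
  have "continuous_on I g"
    unfolding g_def I_def by (intro continuous_intros u)
  then obtain x0 where "x0 \<in> I" and x0: "\<And>x. x \<in> I \<Longrightarrow> g x \<le> g x0"
    using continuous_attains_sup[OF _ \<open>I \<noteq> {}\<close>] unfolding I_def by force
  have "m \<in> I"
    unfolding I_def using \<open>\<rho> > 0\<close> by simp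
  then have "g x0 \<ge> - B"
    using x0[of m] xb[of m] unfolding g_def B_def by simp
  moreover have "g x < - B" if "x = m - \<rho> \<or> x = m + \<rho>" for x
  proof -
    have "(x - m)\<^sup>2 = \<rho>\<^sup>2" "x \<in> I"
      using that \<open>\<rho> > 0\<close> unfolding I_def by auto
    then show ?thesis
      unfolding g_def using K\<rho> xb B_def by (smt (verit))
  qed
  ultimately have "x0 \<noteq> m - \<rho>" "x0 \<noteq> m + \<rho>"
    by force+
  with \<open>x0 \<in> I\<close> have "x0 \<in> {m - \<rho><..<m + \<rho>}"
    unfolding I_def by auto
  moreover have "u x \<le> u x0 + K * ((x - m)\<^sup>2 - (x0 - m)\<^sup>2)" if "x \<in> {m - \<rho>..m + \<rho>}" for x
    using x0[of x] that unfolding g_def I_def by (simp add: algebra_simps)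
  ultimately show ?thesis
    by (rule that)
qed

lemma periodic_visc_subsol_zero:
  assumes b: "\<forall>s\<in>{0..1}. H e s 0 \<le> b"
  shows "periodic_visc_subsol H e b (\<lambda>_. 0)"
  unfolding periodic_visc_subsol_def
proof (intro conjI ballI allI impI)
  fix s \<phi>' and \<phi> :: "real \<Rightarrow> real"
  assume s: "s \<in> {0<..<1}" and test: "(\<forall>x. (\<phi> has_real_derivative \<phi>' x) (at x)) \<and>
    continuous_on UNIV \<phi>' \<and> \<phi> s = 0 \<and> (\<exists>\<delta>>0. \<forall>x\<in>{0<..<1}. \<bar>x - s\<bar> < \<delta> \<longrightarrow> 0 \<le> \<phi> x)"
  then obtain \<delta> where "\<delta> > 0" and \<delta>: "\<forall>x\<in>{0<..<1}. \<bar>x - s\<bar> < \<delta> \<longrightarrow> 0 \<le> \<phi> x"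
    by blast
  define d where "d = min \<delta> (min s (1 - s))"
  have "d > 0"
    using \<open>\<delta> > 0\<close> s unfolding d_def by auto
  moreover have "\<forall>y. \<bar>s - y\<bar> < d \<longrightarrow> \<phi> s \<le> \<phi> y"
  proof (intro allI impI)
    fix y
    assume "\<bar>s - y\<bar> < d"
    then have "y \<in> {0<..<1}" "\<bar>y - s\<bar> < \<delta>"
      unfolding d_def by auto
    then show "\<phi> s \<le> \<phi> y"
      using \<delta> test by auto
  qed
  ultimately have "\<phi>' s = 0"
    using DERIV_local_min test by blast
  then show "H e s (\<phi>' s) \<le> b"
    using b s by auto
qed simp_all

lemma exists_le_level_if_periodic_visc_subsol:
  assumes "hamiltonian (H e)" and sub: "periodic_visc_subsol H e b u" and s0: "s0 \<in> {0..1}"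
  shows "\<exists>p. H e s0 p \<le> b"
proof (rule ccontr)
  interpret hamiltonian "H e"
    by fact
  assume "\<not> (\<exists>p. H e s0 p \<le> b)"
  then have "\<And>p. H e s0 p > b"
    by (simp add: not_le)
  then obtain d where "d > 0" and far: "\<And>t q. t \<in> {0..1} \<Longrightarrow> dist t s0 < d \<Longrightarrow> H e t q > b"
    using above_level_nearby[OF s0] by blast
  define d' where "d' = min d (1/2)"
  have d': "d' > 0" "d' \<le> d" "d' \<le> 1/2"
    using \<open>d > 0\<close> unfolding d'_def by auto
  define m where "m = (if s0 \<le> 1/2 then s0 + d'/2 else s0 - d'/2)"
  define \<rho> where "\<rho> = d' / 4"
  have "\<rho> > 0"
    using d' unfolding \<rho>_def by simp
  have I01: "0 < m - \<rho>" "m + \<rho> < 1"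
    using d' s0 unfolding m_def \<rho>_def by auto
  have near: "dist x s0 < d" if "x \<in> {m - \<rho>..m + \<rho>}" for x
    using that d' unfolding m_def \<rho>_def dist_real_def by (auto split: if_splits)
  have "continuous_on {0..1} u"
    using sub unfolding periodic_visc_subsol_def by blast
  then have "continuous_on {m - \<rho>..m + \<rho>} u"
    by (rule continuous_on_subset) (use I01 in auto)
  then obtain x0 K where x0: "x0 \<in> {m - \<rho><..<m + \<rho>}"
    and touch: "\<And>x. x \<in> {m - \<rho>..m + \<rho>} \<Longrightarrow> u x \<le> u x0 + K * ((x - m)\<^sup>2 - (x0 - m)\<^sup>2)"
    using parabola_touches_from_above \<open>\<rho> > 0\<close> by blast
  have x0_01: "x0 \<in> {0<..<1}"
    using x0 I01 by auto
  define \<phi> where "\<phi> x = u x0 + K * ((x - m)\<^sup>2 - (x0 - m)\<^sup>2)" for x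
  define \<phi>' where "\<phi>' x = 2 * K * (x - m)" for x
  have deriv: "\<forall>x. (\<phi> has_real_derivative \<phi>' x) (at x)"
    unfolding \<phi>_def \<phi>'_def by (auto intro!: derivative_eq_intros)
  have "continuous_on UNIV \<phi>'"
    unfolding \<phi>'_def by (intro continuous_intros)
  moreover have "\<phi> x0 = u x0"
    unfolding \<phi>_def by simp
  moreover have "\<exists>\<delta>>0. \<forall>x\<in>{0<..<1}. \<bar>x - x0\<bar> < \<delta> \<longrightarrow> u x \<le> \<phi> x"
  proof (intro exI[of _ "min (x0 - (m - \<rho>)) (m + \<rho> - x0)"] conjI ballI impI)
    show "min (x0 - (m - \<rho>)) (m + \<rho> - x0) > 0"
      using x0 by simp
    fix x
    assume "\<bar>x - x0\<bar> < min (x0 - (m - \<rho>)) (m + \<rho> - x0)"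
    then have "x \<in> {m - \<rho>..m + \<rho>}"
      by auto
    then show "u x \<le> \<phi> x"
      unfolding \<phi>_def by (rule touch)
  qed
  ultimately have "H e x0 (\<phi>' x0) \<le> b"
    using sub[unfolded periodic_visc_subsol_def, THEN conjunct2, THEN conjunct2, rule_format, OF x0_01]
      deriv by blast
  moreover have "H e x0 (\<phi>' x0) > b"
    using far[of x0] near x0 x0_01 by auto
  ultimately show False
    by simp
qed


lemma exists_le_c_gamma:
  assumes "hamiltonian (H e)" and s: "s \<in> {0..1}"
  shows "\<exists>p. H e s p \<le> c_gamma H e"
proof -
  interpret hamiltonian "H e"
    by fact
  define Bs where "Bs = {b. \<exists>u. periodic_visc_subsol H e b u}"
  obtain p0 where p0: "\<And>p. H e s p0 \<le> H e s p"
    using min_attained[OF s] by blast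
  obtain B where "\<forall>s\<in>{0..1}. H e s 0 \<le> B"
    using bounded_at_zero by blast
  then have "periodic_visc_subsol H e B (\<lambda>_. 0)"
    by (rule periodic_visc_subsol_zero)
  then have "B \<in> Bs"
    unfolding Bs_def by blast
  then have "Bs \<noteq> {}"
    by blast
  moreover have "H e s p0 \<le> b" if b: "b \<in> Bs" for b
  proof -
    obtain u where "periodic_visc_subsol H e b u"
      using b unfolding Bs_def by blast
    then obtain p where "H e s p \<le> b"
      using exists_le_level_if_periodic_visc_subsol[where H = H and e = e, OF assms(1) _ s] by blast
    then show ?thesis
      using p0[of p] by simp
  qed
  ultimately have "H e s p0 \<le> c_gamma H e"
    unfolding c_gamma_def Bs_def[symmetric] by (rule cInf_greatest)
  then show ?thesis
    by blast
qed

lemma exists_le_a_gamma: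
  assumes "hamiltonian (H e)" and "s \<in> {0..1}"
  shows "\<exists>p. H e s p \<le> a_gamma H e"
  unfolding a_gamma_def by (rule hamiltonian.exists_le_Sup_Inf[OF assms])

section \<open>Strict subsolutions above the critical value\<close>

lemma network_setting_hamiltonian:
  "network_setting V E orig t neg H \<Longrightarrow> e \<in> E \<Longrightarrow> hamiltonian (H e)"
  unfolding network_setting_def by unfold_locales auto

lemma network_setting_edgeD:
  assumes "network_setting V E orig t neg H" and "e \<in> E"
  shows "t e \<in> V" "neg e \<in> E" "orig (neg e) = t e" "t (neg e) = orig e"
proof -
  have edge: "\<And>e. e \<in> E \<Longrightarrow> t e \<in> V \<and> neg e \<in> E \<and> neg (neg e) = e \<and> orig (neg e) = t e"
    using assms(1) unfolding network_setting_def by blast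
  show "t e \<in> V" "neg e \<in> E" "orig (neg e) = t e"
    using edge[OF assms(2)] by simp_all
  have "orig (neg (neg e)) = t (neg e)"
    using edge[OF assms(2)] edge[of "neg e"] by blast
  then show "t (neg e) = orig e"
    using edge[OF assms(2)] by simp
qed

lemma exists_le_level_above_a0:
  assumes ns: "network_setting V E orig t neg H" and e: "e \<in> E"
    and b: "a0 E orig t H \<le> b" and s: "s \<in> {0..1}"
  shows "\<exists>p. H e s p \<le> b"
proof -
  have ham: "hamiltonian (H e)"
    by (rule network_setting_hamiltonian[OF ns e])
  define F where "F = a_gamma H ` {e\<in>E. orig e \<noteq> t e} \<union> c_gamma H ` {e\<in>E. orig e = t e}"
  have "finite F"
    using ns unfolding network_setting_def F_def by simp
  then have F_le: "x \<le> b" if "x \<in> F" for x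
    using Max_ge[OF _ that] b unfolding a0_def F_def[symmetric] by fastforce
  show ?thesis
  proof (cases "orig e = t e")
    case True
    then have "c_gamma H e \<le> b"
      using F_le e unfolding F_def by blast
    then show ?thesis
      using exists_le_c_gamma[where H = H and e = e, OF ham s] by (meson order.trans)
  next
    case False
    then have "a_gamma H e \<le> b"
      using F_le e unfolding F_def by blast
    then show ?thesis
      using exists_le_a_gamma[where H = H and e = e, OF ham s] by (meson order.trans)
  qed
qed

lemma sigma_strict_mono:
  assumes ns: "network_setting V E orig t neg H" and e: "e \<in> E"
    and "a0 E orig t H \<le> b" and "b < a"
  shows "sigma H b e < sigma H a e"
proof -
  interpret hamiltonian "H e"
    by (rule network_setting_hamiltonian[OF ns e])
  show ?thesis
    unfolding sigma_eq_integral_max_root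
    using integral_max_root_strict_mono exists_le_level_above_a0[OF ns e] assms(3,4) by blast
qed

lemma exists_dfe_subsol_above_a0:
  assumes ns: "network_setting V E orig t neg H"
  shows "\<exists>b \<ge> a0 E orig t H. \<exists>\<phi>. dfe_subsol E orig t H b \<phi>"
proof -
  have "\<exists>B. \<forall>s\<in>{0..1}. H e s 0 \<le> B" if "e \<in> E" for e
    using hamiltonian.bounded_at_zero[OF network_setting_hamiltonian[OF ns that]] .
  then obtain B where B: "\<And>e s. e \<in> E \<Longrightarrow> s \<in> {0..1} \<Longrightarrow> H e s 0 \<le> B e"
    by metis
  have "finite E"
    using ns unfolding network_setting_def by blast
  define b where "b = max (a0 E orig t H) (Max (B ` E))"
  have Bb: "H e s 0 \<le> b" if "e \<in> E" "s \<in> {0..1}" for e s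
  proof -
    have "B e \<le> Max (B ` E)"
      using \<open>finite E\<close> that(1) by simp
    then show ?thesis
      using B[OF that] unfolding b_def by linarith
  qed
  \<comment> \<open>at level b the momentum 0 is admissible everywhere, so \<open>\<sigma>\<^sub>b \<ge> 0\<close> and 0 is a subsolution\<close>
  have "dfe_subsol E orig t H b (\<lambda>_. 0)"
    unfolding dfe_subsol_def
  proof
    fix e
    assume e: "e \<in> E"
    interpret hamiltonian "H e"
      by (rule network_setting_hamiltonian[OF ns e])
    have ex: "\<forall>s\<in>{0..1}. \<exists>p. H e s p \<le> b"
      using Bb e by blast
    have "0 \<le> integral {0..1} (max_root (H e) b)"
      by (rule integral_nonneg[OF max_root_integrable[OF ex]]) (use le_max_root ex Bb e in blast)
    then show "(0::real) - 0 \<le> sigma H b e"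
      by (simp add: sigma_eq_integral_max_root)
  qed
  moreover have "a0 E orig t H \<le> b"
    unfolding b_def by simp
  ultimately show ?thesis
    by blast
qed

lemma exists_strict_dfe_subsol:
  assumes ns: "network_setting V E orig t neg H" and "crit_value E orig t H < a"
  shows "\<exists>\<phi>. \<forall>e\<in>E. \<phi> (t e) - \<phi> (orig e) < sigma H a e"
proof -
  define S where "S = {b. b \<ge> a0 E orig t H \<and> (\<exists>\<phi>. dfe_subsol E orig t H b \<phi>)}"
  have "S \<noteq> {}"
    using exists_dfe_subsol_above_a0[OF ns] unfolding S_def by blast
  then obtain b where "b \<in> S" "b < a"
    using cInf_lessD assms(2) unfolding crit_value_def S_def[symmetric] by blast
  then obtain \<phi> where \<phi>: "dfe_subsol E orig t H b \<phi>" and "a0 E orig t H \<le> b"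
    unfolding S_def by blast
  have "\<phi> (t e) - \<phi> (orig e) < sigma H a e" if "e \<in> E" for e
    using \<phi> sigma_strict_mono[OF ns that \<open>a0 E orig t H \<le> b\<close> \<open>b < a\<close>] that
    unfolding dfe_subsol_def by fastforce
  then show ?thesis
    by blast
qed


section \<open>Comparison principle\<close>

lemma dfe_solves_at_le:
  assumes "dfe_solves_at E orig t neg H a v x" and "finite E" and "e \<in> E" and "orig e = x"
  shows "v x \<le> v (t e) + sigma H a (neg e)"
  using assms unfolding dfe_solves_at_def by (auto intro: Min_le)

lemma dfe_solves_at_obtain_edge:
  assumes "dfe_solves_at E orig t neg H a v x" and "finite E" and "\<exists>e\<in>E. orig e = x"
  obtains e where "e \<in> E" "orig e = x" "v x = v (t e) + sigma H a (neg e)"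
proof -
  have "v x \<in> (\<lambda>e. v (t e) + sigma H a (neg e)) ` {e\<in>E. orig e = x}"
    using assms unfolding dfe_solves_at_def by (auto intro: Min_in)
  then show ?thesis
    using that by blast
qed

text \<open>Without edges leaving x, both values are the same junk value \<open>Min {}\<close>.\<close>

lemma dfe_solves_at_no_edge:
  assumes "dfe_solves_at E orig t neg H a v x" and "dfe_solves_at E orig t neg H a w x"
    and "\<not> (\<exists>e\<in>E. orig e = x)"
  shows "v x = w x"
proof -
  have no_edge: "{e\<in>E. orig e = x} = {}"
    using assms(3) by blast
  have "v x = Min ((\<lambda>e. v (t e) + sigma H a (neg e)) ` {})"
    using assms(1) unfolding dfe_solves_at_def by (simp only: no_edge)
  moreover have "w x = Min ((\<lambda>e. w (t e) + sigma H a (neg e)) ` {})"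
    using assms(2) unfolding dfe_solves_at_def by (simp only: no_edge)
  ultimately show ?thesis
    by simp
qed

lemma dfe_comparison:
  assumes "finite V" and "finite E"
    and t_in: "\<And>e. e \<in> E \<Longrightarrow> t e \<in> V" and neg_in: "\<And>e. e \<in> E \<Longrightarrow> neg e \<in> E"
    and orig_neg: "\<And>e. e \<in> E \<Longrightarrow> orig (neg e) = t e" and t_neg: "\<And>e. e \<in> E \<Longrightarrow> t (neg e) = orig e"
    and strict: "\<forall>e\<in>E. \<phi> (t e) - \<phi> (orig e) < sigma H a e"
    and v: "\<forall>x\<in>V - V'. dfe_solves_at E orig t neg H a v x"
    and w: "\<forall>x\<in>V - V'. dfe_solves_at E orig t neg H a w x"
    and boundary: "\<forall>x\<in>V'. v x \<le> w x"
  shows "\<forall>x\<in>V. v x \<le> w x"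
proof (rule ccontr)
  assume "\<not> (\<forall>x\<in>V. v x \<le> w x)"
  then obtain x0 where "x0 \<in> V" "v x0 > w x0"
    by force
  define M where "M = Max ((\<lambda>x. v x - w x) ` V)"
  have M_ge: "v x - w x \<le> M" if "x \<in> V" for x
    unfolding M_def using \<open>finite V\<close> that by simp
  have "M > 0"
    using M_ge[OF \<open>x0 \<in> V\<close>] \<open>v x0 > w x0\<close> by simp
  define A where "A = {x\<in>V. v x - w x = M}"
  have "finite A"
    using \<open>finite V\<close> unfolding A_def by simp
  have "M \<in> (\<lambda>x. v x - w x) ` V"
    unfolding M_def using \<open>finite V\<close> \<open>x0 \<in> V\<close> by (intro Max_in) auto
  then have "A \<noteq> {}"
    unfolding A_def by auto
  \<comment> \<open>along an optimal edge for w, the maximum of v - w propagates while w - \<phi> strictly decreases\<close>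
  have descent: "\<exists>y\<in>A. w y - \<phi> y < w x - \<phi> x" if "x \<in> A" for x
  proof -
    have "x \<in> V" "v x - w x = M"
      using that unfolding A_def by auto
    then have "x \<notin> V'"
      using boundary \<open>M > 0\<close> by force
    with \<open>x \<in> V\<close> v w have sol: "dfe_solves_at E orig t neg H a v x" "dfe_solves_at E orig t neg H a w x"
      by auto
    have "\<exists>e\<in>E. orig e = x"
      using dfe_solves_at_no_edge[OF sol] \<open>v x - w x = M\<close> \<open>M > 0\<close> by auto
    then obtain e where e: "e \<in> E" "orig e = x" "w x = w (t e) + sigma H a (neg e)"
      using dfe_solves_at_obtain_edge[OF sol(2) \<open>finite E\<close>] by blast
    have "v x \<le> v (t e) + sigma H a (neg e)"
      using dfe_solves_at_le[OF sol(1) \<open>finite E\<close> e(1,2)] .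
    then have "t e \<in> A"
      using M_ge[OF t_in[OF e(1)]] t_in[OF e(1)] e(3) \<open>v x - w x = M\<close> unfolding A_def by simp
    moreover have "\<phi> x - \<phi> (t e) < sigma H a (neg e)"
      using strict neg_in[OF e(1)] t_neg[OF e(1)] orig_neg[OF e(1)] e(2) by force
    ultimately show ?thesis
      using e(3) by (intro bexI[of _ "t e"]) auto
  qed
  obtain x where "x \<in> A" and x_min: "w x - \<phi> x = Min ((\<lambda>y. w y - \<phi> y) ` A)"
    using Min_in[of "(\<lambda>y. w y - \<phi> y) ` A"] \<open>finite A\<close> \<open>A \<noteq> {}\<close> by fastforce
  then obtain y where "y \<in> A" "w y - \<phi> y < w x - \<phi> x"
    using descent by blast
  moreover have "Min ((\<lambda>y. w y - \<phi> y) ` A) \<le> w y - \<phi> y"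
    using \<open>finite A\<close> \<open>y \<in> A\<close> by simp
  ultimately show False
    using x_min by simp
qed

theorem proposition6p6:
  fixes V :: "'v set" and E :: "'e set" and orig t :: "'e \<Rightarrow> 'v" and neg :: "'e \<Rightarrow> 'e"
    and H :: "'e \<Rightarrow> real \<Rightarrow> real \<Rightarrow> real" and a :: real
    and V' :: "'v set" and u v w :: "'v \<Rightarrow> real"
  assumes "network_setting V E orig t neg H"
    and "a > crit_value E orig t H"
    and "V' \<subseteq> V"
    and "\<forall>x\<in>V - V'. dfe_solves_at E orig t neg H a v x"
    and "\<forall>x\<in>V'. v x = u x"
    and "\<forall>x\<in>V - V'. dfe_solves_at E orig t neg H a w x"
    and "\<forall>x\<in>V'. w x = u x"
  shows "\<forall>x\<in>V. v x = w x"
proof -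
  obtain \<phi> where \<phi>: "\<forall>e\<in>E. \<phi> (t e) - \<phi> (orig e) < sigma H a e"
    using exists_strict_dfe_subsol[OF assms(1,2)] by blast
  have fin: "finite V" "finite E"
    using assms(1) unfolding network_setting_def by auto
  note edge = network_setting_edgeD[OF assms(1)]
  have "\<forall>x\<in>V'. v x \<le> w x" "\<forall>x\<in>V'. w x \<le> v x"
    using assms(5,7) by auto
  then have "\<forall>x\<in>V. v x \<le> w x" "\<forall>x\<in>V. w x \<le> v x"
    using dfe_comparison[OF fin edge \<phi>] assms(4,6) by blast+
  then show ?thesis
    by force
qed

end
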